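(* Let $k\ge0$ be an integer and $a,b,c,d\in\mathbb{C}$ with $c,\ d+1,\ a+b-d+1\notin\{0,-1,-2,\dots\}$, $d-a+1,d-b+1\notin\{0,-1,-2,\dots\}$, and $\mathrm{Re}(d-a-b-k)>0$. Then $$\begin{aligned} {}_3F_2\!\left(\left.\begin{array}{c}a,\ b,\ c+k+1\\ d+1,\ c\end{array}\right|1\right) &=\frac{(-1)^k\,\Gamma(d+1)\,\Gamma(d-a-b-k)\,(a+b-d+1)_k}{c\,\Gamma(d-a+1)\,\Gamma(d-b+1)}\\ &\quad\times\Bigg\{\big[a(b-c)+c(d-b)\big]\,{}_3F_2\!\left(\left.\begin{array}{c}-k,\ a,\ b\\ c+1,\ a+b-d+1\end{array}\right|1\right)\\ &\qquad+\frac{ab\,(c-d)\,k}{(c+1)(a+b-d+1)}\,{}_3F_2\!\left(\left.\begin{array}{c}1-k,\ a+1,\ b+1\\ c+2,\ a+b-d+2\end{array}\right|1\right)\Bigg\}, \end{aligned}$$ where the two ${}_3F_2$ on the right are terminating (finite) sums (the second term is absent when $k=0$).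
   Context: ${}_3F_2(a_1,a_2,a_3;b_1,b_2;1)=\sum_{m\ge0}\frac{(a_1)_m(a_2)_m(a_3)_m}{m!\,(b_1)_m(b_2)_m}$ with $(\alpha)_m=\Gamma(\alpha+m)/\Gamma(\alpha)$; it converges absolutely if $\mathrm{Re}(b_1+b_2-a_1-a_2-a_3)>0$, and terminates after $m=N$ if some upper parameter equals $-N$ with $N\in\{0,1,2,\dots\}$. *)

theory Defs
  imports "HOL-Analysis.Analysis"
begin

text \<open>Generalized hypergeometric series 3F2 at argument 1, as the series sum over m.
  For terminating series the terms vanish eventually, so this is the finite sum.\<close>
definition hyp3F2 :: "complex \<Rightarrow> complex \<Rightarrow> complex \<Rightarrow> complex \<Rightarrow> complex \<Rightarrow> complex" where
  "hyp3F2 a1 a2 a3 b1 b2 =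
     (\<Sum>m. pochhammer a1 m * pochhammer a2 m * pochhammer a3 m /
            (fact m * pochhammer b1 m * pochhammer b2 m))"

end

theory Submission
  imports Defs "HOL-Computational_Algebra.Formal_Power_Series" "HOL-Real_Asymp.Real_Asymp"
begin

text \<open>
  By the Chu--Vandermonde identity, \<open>(c+k+1)\<^sub>m/(c)\<^sub>m\<close> is the terminating series
  \<open>\<Sum>\<^sub>j (-m)\<^sub>j (-k-1)\<^sub>j / (j! (c)\<^sub>j)\<close>. Exchanging this finite sum with the sum over \<open>m\<close>
  turns the left-hand side into a combination of the series \<open>\<Sum>\<^sub>m (-m)\<^sub>j (a)\<^sub>m (b)\<^sub>m / (m! (d+1)\<^sub>m)\<close>,
  each of which is a shifted Gauss series \<open>\<^sub>2F\<^sub>1(a+j, b+j; d+1+j; 1)\<close> and is evaluated by Gauss's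
  theorem. Pascal's rule regroups the resulting \<open>k+2\<close> terms into \<open>k+1\<close> adjacent pairs; each pair is
  the \<open>i\<close>-th term of \<open>\<^sub>3F\<^sub>2(-k, a, b; c+1, a+b-d+1; 1)\<close> times a factor linear in \<open>i\<close>, and the
  part proportional to \<open>i\<close> is the second terminating series on the right.

  Gauss's theorem is proved from the contiguous relation \<open>c(c-a-b) F(c) = (c-a)(c-b) F(c+1)\<close>:
  iterating it \<open>n\<close> times and letting \<open>n \<rightarrow> \<infinity>\<close>, the quotient of Pochhammer symbols tends to the
  Gamma quotient while \<open>F(a, b; c+n; 1) \<rightarrow> 1\<close>.
\<close>


section \<open>Pochhammer symbols\<close>

lemma pochhammer_neq_0_if_not_nonpos_Int:
  "(z :: 'a :: field_char_0) \<notin> \<int>\<^sub>\<le>\<^sub>0 \<Longrightarrow> pochhammer z n \<noteq> 0"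
  by (auto simp: pochhammer_eq_0_iff)

lemma add_of_nat_notin_nonpos_Ints:
  "(z :: 'a :: ring_char_0) \<notin> \<int>\<^sub>\<le>\<^sub>0 \<Longrightarrow> z + of_nat n \<notin> \<int>\<^sub>\<le>\<^sub>0"
  using nonpos_Ints_diff_Nats[of "z + of_nat n" "of_nat n"] by auto

lemma Re_pos_notin_nonpos_Ints: "Re z > 0 \<Longrightarrow> z \<notin> \<int>\<^sub>\<le>\<^sub>0"
  by (auto elim!: nonpos_Ints_cases')

lemma pochhammer_ge_0: "0 \<le> (x :: 'a :: linordered_semidom) \<Longrightarrow> 0 \<le> pochhammer x n"
  by (induction n) (simp_all add: pochhammer_rec')

lemma norm_pochhammer_le: "norm (pochhammer (z :: 'a :: real_normed_field) n) \<le> pochhammer (norm z) n"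
proof (induction n)
  case (Suc n)
  have "norm (pochhammer z (Suc n)) = norm (z + of_nat n) * norm (pochhammer z n)"
    by (simp add: pochhammer_rec' norm_mult)
  also have "\<dots> \<le> (norm z + of_nat n) * pochhammer (norm z) n"
    using Suc.IH norm_triangle_ineq[of z "of_nat n"] by (intro mult_mono) auto
  finally show ?case by (simp add: pochhammer_rec')
qed simp

lemma pochhammer_Re_le_norm_pochhammer:
  "Re z \<ge> 0 \<Longrightarrow> pochhammer (Re z) n \<le> norm (pochhammer z n)"
proof (induction n)
  case (Suc n)
  have "pochhammer (Re z) (Suc n) = Re (z + of_nat n) * pochhammer (Re z) n"
    by (simp add: pochhammer_rec')
  also have "\<dots> \<le> norm (z + of_nat n) * norm (pochhammer z n)"
    using Suc complex_Re_le_cmod[of "z + of_nat n"]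
    by (intro mult_mono) (auto intro: pochhammer_ge_0)
  finally show ?case by (simp add: pochhammer_rec' norm_mult)
qed simp

lemma pochhammer_mono: "0 \<le> x \<Longrightarrow> x \<le> y \<Longrightarrow> pochhammer x n \<le> pochhammer (y :: real) n"
  by (induction n) (auto simp: pochhammer_rec' intro!: mult_mono pochhammer_ge_0)

lemma pochhammer_minus_of_nat:
  "pochhammer (- of_nat k :: 'a :: field_char_0) i = (-1) ^ i * fact i * of_nat (k choose i)"
proof -
  have "of_nat (k choose i) = ((-1) ^ i * pochhammer (- of_nat k) i / fact i :: 'a)"
    using gbinomial_pochhammer[of "of_nat k :: 'a" i] by (simp add: binomial_gbinomial)
  thus ?thesis by (simp flip: power_add)
qed

lemma pochhammer_shift_ratio_Vandermonde:
  fixes c :: "'a :: field_char_0"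
  assumes "c \<notin> \<int>\<^sub>\<le>\<^sub>0"
  shows "pochhammer (c + of_nat n) m / pochhammer c m
           = (\<Sum>j\<le>n. pochhammer (- of_nat m) j * pochhammer (- of_nat n) j / (fact j * pochhammer c j))"
proof -
  have "pochhammer c m * pochhammer (c + of_nat m) n = pochhammer c n * pochhammer (c + of_nat n) m"
    by (simp flip: pochhammer_product' add: add.commute)
  hence "pochhammer (c + of_nat n) m / pochhammer c m = pochhammer (c + of_nat m) n / pochhammer c n"
    using pochhammer_neq_0_if_not_nonpos_Int[OF assms] by (simp add: frac_eq_eq mult.commute)
  also have "\<dots> = (\<Sum>j\<le>n. pochhammer (- of_nat m) j * pochhammer (- of_nat n) j / (fact j * pochhammer c j))"
  proof -
    have "\<forall>i\<in>{0..<n}. c \<noteq> - of_nat i"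
      using assms by auto
    from Vandermonde_pochhammer[OF this, of "- of_nat m"] show ?thesis
      by (simp add: atLeast0AtMost)
  qed
  finally show ?thesis .
qed

lemma sum_Suc_choose_mult:
  fixes f :: "nat \<Rightarrow> 'a :: comm_semiring_1"
  shows "(\<Sum>j\<le>Suc k. of_nat (Suc k choose j) * f j) = (\<Sum>j\<le>k. of_nat (k choose j) * (f j + f (Suc j)))"
proof -
  have "(\<Sum>j\<le>Suc k. of_nat (Suc k choose j) * f j)
      = f 0 + (\<Sum>j\<le>k. of_nat (k choose Suc j) * f (Suc j)) + (\<Sum>j\<le>k. of_nat (k choose j) * f (Suc j))"
    by (subst sum.atMost_Suc_shift) (simp add: sum.distrib algebra_simps)
  also have "f 0 + (\<Sum>j\<le>k. of_nat (k choose Suc j) * f (Suc j)) = (\<Sum>j\<le>Suc k. of_nat (k choose j) * f j)"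
    by (subst sum.atMost_Suc_shift) simp
  also have "\<dots> = (\<Sum>j\<le>k. of_nat (k choose j) * f j)"
    by (simp add: binomial_eq_0)
  finally show ?thesis
    by (simp add: sum.distrib algebra_simps)
qed


section \<open>Gauss's summation theorem\<close>

definition hyp2F1_term :: "complex \<Rightarrow> complex \<Rightarrow> complex \<Rightarrow> nat \<Rightarrow> complex" where
  "hyp2F1_term a b c m = pochhammer a m * pochhammer b m / (fact m * pochhammer c m)"

definition hyp2F1 :: "complex \<Rightarrow> complex \<Rightarrow> complex \<Rightarrow> complex" where
  "hyp2F1 a b c = (\<Sum>m. hyp2F1_term a b c m)"

lemma hyp2F1_term_Suc:
  "hyp2F1_term a b c (Suc m)
     = hyp2F1_term a b c m * ((a + of_nat m) * (b + of_nat m) / (of_nat (Suc m) * (c + of_nat m)))"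
  unfolding hyp2F1_term_def pochhammer_rec' fact_Suc of_nat_mult by (simp add: mult_ac)

lemma hyp2F1_term_Suc_rGamma_series:
  assumes "c \<notin> \<int>\<^sub>\<le>\<^sub>0"
  shows "hyp2F1_term a b c (Suc m) = rGamma_series a m * rGamma_series b m / rGamma_series c m
           * exp ((a + b - c) * of_real (ln (of_nat m))) / of_nat (Suc m)"
proof -
  define L where "L = (of_real (ln (of_nat m)) :: complex)"
  have "exp ((a + b - c) * L) = exp (a * L) * exp (b * L) / exp (c * L)"
    by (simp add: exp_add exp_diff ring_distribs)
  moreover have "pochhammer c (Suc m) \<noteq> 0"
    using assms by (rule pochhammer_neq_0_if_not_nonpos_Int)
  ultimately show ?thesis
    unfolding hyp2F1_term_def rGamma_series_def L_def[symmetric]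
    by (simp add: field_simps del: of_nat_Suc)
qed

lemma hyp2F1_term_Suc_bound:
  assumes "c \<notin> \<int>\<^sub>\<le>\<^sub>0"
  obtains K where "K > 0"
    "\<And>m. m > 0 \<Longrightarrow> norm (hyp2F1_term a b c (Suc m)) \<le> K * real m powr (Re (a + b - c) - 1)"
proof -
  define G where "G m = rGamma_series a m * rGamma_series b m / rGamma_series c m" for m
  have "G \<longlonglongrightarrow> rGamma a * rGamma b / rGamma c"
    unfolding G_def using assms by (intro tendsto_intros) (simp add: rGamma_eq_zero_iff)
  hence "Bseq G" by (intro convergent_imp_Bseq convergentI)
  then obtain K where K: "K > 0" "\<And>m. norm (G m) \<le> K"
    by (auto simp: Bseq_def)
  have "norm (hyp2F1_term a b c (Suc m)) \<le> K * real m powr (Re (a + b - c) - 1)" if "m > 0" for m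
  proof -
    have "norm (exp ((a + b - c) * of_real (ln (of_nat m)))) = real m powr Re (a + b - c)"
      using that by (simp add: norm_exp_eq_Re powr_def)
    hence "norm (hyp2F1_term a b c (Suc m)) = norm (G m) * real m powr Re (a + b - c) / real (Suc m)"
      unfolding hyp2F1_term_Suc_rGamma_series[OF assms, of a b m] G_def norm_mult norm_divide
      by (simp del: of_nat_Suc)
    also have "\<dots> \<le> K * real m powr Re (a + b - c) / real m"
      using that K by (intro frac_le mult_right_mono) auto
    also have "\<dots> = K * real m powr (Re (a + b - c) - 1)"
      using that by (simp add: powr_diff)
    finally show ?thesis .
  qed
  with K(1) show ?thesis by (rule that)
qed

lemma summable_norm_hyp2F1_term:
  assumes "c \<notin> \<int>\<^sub>\<le>\<^sub>0" "Re (c - a - b) > 0"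
  shows "summable (\<lambda>m. norm (hyp2F1_term a b c m))"
proof -
  obtain K where K: "\<And>m. m > 0 \<Longrightarrow> norm (hyp2F1_term a b c (Suc m)) \<le> K * real m powr (Re (a + b - c) - 1)"
    using hyp2F1_term_Suc_bound[OF assms(1)] by blast
  have "summable (\<lambda>m. K * real m powr (Re (a + b - c) - 1))"
    using assms(2) by (intro summable_mult) (simp add: summable_real_powr_iff)
  hence "summable (\<lambda>m. norm (hyp2F1_term a b c (Suc m)))"
    by (rule summable_comparison_test_ev[rotated])
       (use eventually_mono[OF eventually_gt_at_top[of 0] K] in simp)
  thus ?thesis by (rule summable_Suc_iff[THEN iffD1])
qed

lemma summable_hyp2F1_term:
  "c \<notin> \<int>\<^sub>\<le>\<^sub>0 \<Longrightarrow> Re (c - a - b) > 0 \<Longrightarrow> summable (hyp2F1_term a b c)"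
  using summable_norm_cancel summable_norm_hyp2F1_term by blast

lemma of_nat_mult_hyp2F1_term_tendsto_0:
  assumes "c \<notin> \<int>\<^sub>\<le>\<^sub>0" "Re (c - a - b) > 0"
  shows "(\<lambda>m. of_nat m * hyp2F1_term a b c m) \<longlonglongrightarrow> 0"
proof -
  obtain K where K: "K > 0"
    "\<And>m. m > 0 \<Longrightarrow> norm (hyp2F1_term a b c (Suc m)) \<le> K * real m powr (Re (a + b - c) - 1)"
    using hyp2F1_term_Suc_bound[OF assms(1)] by blast
  have "(\<lambda>m. 2 * K * real m powr Re (a + b - c)) \<longlonglongrightarrow> 0"
    using assms(2) by (intro tendsto_mult_right_zero tendsto_neg_powr filterlim_real_sequentially) auto
  hence "(\<lambda>m. of_nat (Suc m) * hyp2F1_term a b c (Suc m)) \<longlonglongrightarrow> 0"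
  proof (rule Lim_null_comparison[rotated])
    show "\<forall>\<^sub>F m in sequentially.
            norm (of_nat (Suc m) * hyp2F1_term a b c (Suc m)) \<le> 2 * K * real m powr Re (a + b - c)"
      using eventually_gt_at_top[of 0]
    proof eventually_elim
      case (elim m)
      have "norm (of_nat (Suc m) * hyp2F1_term a b c (Suc m))
              \<le> (2 * real m) * (K * real m powr (Re (a + b - c) - 1))"
        unfolding norm_mult norm_of_nat using elim K by (intro mult_mono) auto
      also have "\<dots> = 2 * K * real m powr Re (a + b - c)"
        using elim by (simp add: powr_diff)
      finally show ?case .
    qed
  qed
  thus ?thesis by (rule LIMSEQ_imp_Suc)
qed

lemma hyp2F1_term_contiguous:
  assumes "c \<notin> \<int>\<^sub>\<le>\<^sub>0"
  shows "c * (c - a - b) * hyp2F1_term a b c m - (c - a) * (c - b) * hyp2F1_term a b (c + 1) m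
       = c * (of_nat m * hyp2F1_term a b c m) - c * (of_nat (Suc m) * hyp2F1_term a b c (Suc m))"
proof -
  have cm: "c + of_nat m \<noteq> 0"
    using add_of_nat_notin_nonpos_Ints[OF assms, of m] by auto
  have "pochhammer c m \<noteq> 0" "c \<noteq> 0"
    using assms pochhammer_neq_0_if_not_nonpos_Int by auto
  moreover have pc: "pochhammer (c + 1) m = (c + of_nat m) * pochhammer c m / c"
    using pochhammer_rec[of c m] pochhammer_rec'[of c m] \<open>c \<noteq> 0\<close> by (simp add: field_simps)
  ultimately have shift: "hyp2F1_term a b (c + 1) m = hyp2F1_term a b c m * c / (c + of_nat m)"
    unfolding hyp2F1_term_def pc using cm by (simp add: field_simps)
  have step: "of_nat (Suc m) * hyp2F1_term a b c (Suc m)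
      = hyp2F1_term a b c m * (a + of_nat m) * (b + of_nat m) / (c + of_nat m)"
    unfolding hyp2F1_term_Suc by (simp add: divide_simps del: of_nat_Suc)
  show ?thesis
    unfolding shift step using cm by (simp add: field_simps)
qed

lemma hyp2F1_contiguous:
  assumes "c \<notin> \<int>\<^sub>\<le>\<^sub>0" "Re (c - a - b) > 0"
  shows "c * (c - a - b) * hyp2F1 a b c = (c - a) * (c - b) * hyp2F1 a b (c + 1)"
proof -
  have "c + 1 \<notin> \<int>\<^sub>\<le>\<^sub>0"
    using add_of_nat_notin_nonpos_Ints[OF assms(1), of 1] by simp
  hence "(\<lambda>m. c * (c - a - b) * hyp2F1_term a b c m - (c - a) * (c - b) * hyp2F1_term a b (c + 1) m)
           sums (c * (c - a - b) * hyp2F1 a b c - (c - a) * (c - b) * hyp2F1 a b (c + 1))"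
    unfolding hyp2F1_def using assms
    by (intro sums_diff sums_mult summable_sums summable_hyp2F1_term) auto
  moreover have "(\<lambda>m. c * (c - a - b) * hyp2F1_term a b c m - (c - a) * (c - b) * hyp2F1_term a b (c + 1) m)
           sums 0"
    using telescope_sums'[OF tendsto_mult_right_zero[OF of_nat_mult_hyp2F1_term_tendsto_0[OF assms]],
        of c]
    by (simp add: hyp2F1_term_contiguous[OF assms(1)])
  ultimately show ?thesis
    using sums_unique2 by fastforce
qed

lemma pochhammer_mult_hyp2F1_shift:
  assumes "c \<notin> \<int>\<^sub>\<le>\<^sub>0" "Re (c - a - b) > 0"
  shows "pochhammer c n * pochhammer (c - a - b) n * hyp2F1 a b c
       = pochhammer (c - a) n * pochhammer (c - b) n * hyp2F1 a b (c + of_nat n)"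
proof (induction n)
  case (Suc n)
  have contiguous: "(c + of_nat n) * (c + of_nat n - a - b) * hyp2F1 a b (c + of_nat n)
      = (c + of_nat n - a) * (c + of_nat n - b) * hyp2F1 a b (c + of_nat n + 1)"
    using assms by (intro hyp2F1_contiguous add_of_nat_notin_nonpos_Ints) auto
  have "pochhammer c (Suc n) * pochhammer (c - a - b) (Suc n) * hyp2F1 a b c
      = (c + of_nat n) * (c + of_nat n - a - b) * (pochhammer c n * pochhammer (c - a - b) n * hyp2F1 a b c)"
    by (simp add: pochhammer_rec' algebra_simps)
  also have "\<dots> = pochhammer (c - a) n * pochhammer (c - b) n
                   * ((c + of_nat n) * (c + of_nat n - a - b) * hyp2F1 a b (c + of_nat n))"
    unfolding Suc.IH by (simp add: ac_simps)
  also have "\<dots> = pochhammer (c - a) (Suc n) * pochhammer (c - b) (Suc n) * hyp2F1 a b (c + of_nat (Suc n))"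
    unfolding contiguous by (simp add: pochhammer_rec' algebra_simps)
  finally show ?case .
qed simp

lemma pochhammer_ratio_tendsto_Gamma:
  fixes a b c :: complex
  assumes "c \<notin> \<int>\<^sub>\<le>\<^sub>0" "c - a - b \<notin> \<int>\<^sub>\<le>\<^sub>0"
  shows "(\<lambda>n. pochhammer (c - a) n * pochhammer (c - b) n / (pochhammer c n * pochhammer (c - a - b) n))
           \<longlonglongrightarrow> Gamma c * Gamma (c - a - b) / (Gamma (c - a) * Gamma (c - b))"
proof (rule LIMSEQ_imp_Suc)
  define R where "R n = rGamma_series (c - a) n * rGamma_series (c - b) n
                          / (rGamma_series c n * rGamma_series (c - a - b) n)" for n
  have "R \<longlonglongrightarrow> rGamma (c - a) * rGamma (c - b) / (rGamma c * rGamma (c - a - b))"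
    unfolding R_def using assms by (intro tendsto_intros) (auto simp: rGamma_eq_zero_iff)
  also have "rGamma (c - a) * rGamma (c - b) / (rGamma c * rGamma (c - a - b))
      = Gamma c * Gamma (c - a - b) / (Gamma (c - a) * Gamma (c - b))"
    by (simp add: rGamma_inverse_Gamma divide_inverse mult_ac)
  also have "R = (\<lambda>n. pochhammer (c - a) (Suc n) * pochhammer (c - b) (Suc n)
              / (pochhammer c (Suc n) * pochhammer (c - a - b) (Suc n)))"
  proof (rule ext)
    fix n
    define L where "L = (of_real (ln (of_nat n)) :: complex)"
    have "exp ((c - a) * L) * exp ((c - b) * L) = exp (c * L) * exp ((c - a - b) * L)"
      by (simp flip: exp_add) (simp add: algebra_simps)
    thus "R n = pochhammer (c - a) (Suc n) * pochhammer (c - b) (Suc n)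
              / (pochhammer c (Suc n) * pochhammer (c - a - b) (Suc n))"
      unfolding R_def rGamma_series_def L_def[symmetric] by (simp add: divide_simps)
  qed
  finally show "(\<lambda>n. pochhammer (c - a) (Suc n) * pochhammer (c - b) (Suc n)
              / (pochhammer c (Suc n) * pochhammer (c - a - b) (Suc n)))
           \<longlonglongrightarrow> Gamma c * Gamma (c - a - b) / (Gamma (c - a) * Gamma (c - b))" .
qed

lemma norm_hyp2F1_term_of_real:
  assumes "x > 0" "y > 0" "z > 0"
  shows "norm (hyp2F1_term (of_real x) (of_real y) (of_real z) m)
           = pochhammer x m * pochhammer y m / (fact m * pochhammer z m)"
  using assms
  by (simp add: hyp2F1_term_def norm_mult norm_divide pochhammer_of_real abs_of_nonneg pochhammer_ge_0
           del: of_real_add)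

lemma norm_hyp2F1_term_Suc_le:
  assumes "0 < r" "r \<le> Re z"
  shows "norm (hyp2F1_term a b z (Suc m)) \<le> norm a * norm b / Re z *
    norm (hyp2F1_term (of_real (norm a + 1)) (of_real (norm b + 1)) (of_real (r + 1)) m)"
proof -
  have "norm (hyp2F1_term a b z (Suc m))
          = norm (pochhammer a (Suc m)) * norm (pochhammer b (Suc m)) / (fact (Suc m) * norm (pochhammer z (Suc m)))"
    by (simp add: hyp2F1_term_def norm_mult norm_divide del: fact_Suc)
  also have "\<dots> \<le> pochhammer (norm a) (Suc m) * pochhammer (norm b) (Suc m) / (fact m * (Re z * pochhammer (r + 1) m))"
  proof (intro frac_le mult_mono norm_pochhammer_le)
    have "Re z * pochhammer (r + 1) m \<le> pochhammer (Re z) (Suc m)"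
      unfolding pochhammer_rec using assms by (intro mult_left_mono pochhammer_mono) auto
    also have "\<dots> \<le> norm (pochhammer z (Suc m))"
      using assms by (intro pochhammer_Re_le_norm_pochhammer) auto
    finally show "Re z * pochhammer (r + 1) m \<le> norm (pochhammer z (Suc m))" .
  qed (use assms in \<open>auto intro!: pochhammer_ge_0 pochhammer_pos mult_pos_pos mult_nonneg_nonneg\<close>)
  also have "\<dots> = norm a * norm b / Re z *
    norm (hyp2F1_term (of_real (norm a + 1)) (of_real (norm b + 1)) (of_real (r + 1)) m)"
    using assms by (subst norm_hyp2F1_term_of_real) (auto simp: pochhammer_rec mult_ac intro: add_nonneg_pos)
  finally show ?thesis .
qed

lemma norm_hyp2F1_minus_1_le:
  fixes a b z :: complex and r :: real
  defines "W \<equiv> (\<Sum>m. norm (hyp2F1_term (of_real (norm a + 1)) (of_real (norm b + 1)) (of_real (r + 1)) m))"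
  assumes "norm a + norm b + 1 < r" "r \<le> Re z"
  shows "norm (hyp2F1 a b z - 1) \<le> norm a * norm b * W / Re z"
proof -
  define w where "w m = norm (hyp2F1_term (of_real (norm a + 1)) (of_real (norm b + 1)) (of_real (r + 1)) m)" for m
  have "0 < r" using assms(2) norm_ge_zero[of a] norm_ge_zero[of b] by linarith
  have "summable w"
    unfolding w_def using assms \<open>0 < r\<close>
    by (intro summable_norm_hyp2F1_term Re_pos_notin_nonpos_Ints) auto
  hence majorant: "summable (\<lambda>m. norm a * norm b / Re z * w m)"
    by (rule summable_mult)
  have bound: "norm (hyp2F1_term a b z (Suc m)) \<le> norm a * norm b / Re z * w m" for m
    unfolding w_def using assms \<open>0 < r\<close> by (intro norm_hyp2F1_term_Suc_le) auto
  have tail: "summable (\<lambda>m. norm (hyp2F1_term a b z (Suc m)))"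
    using bound by (intro summable_comparison_test[OF _ majorant]) auto
  hence "summable (hyp2F1_term a b z)"
    by (subst summable_Suc_iff[symmetric]) (rule summable_norm_cancel)
  hence "hyp2F1 a b z - 1 = (\<Sum>m. hyp2F1_term a b z (Suc m))"
    unfolding hyp2F1_def by (subst suminf_split_head) (simp_all add: hyp2F1_term_def)
  also have "norm \<dots> \<le> (\<Sum>m. norm (hyp2F1_term a b z (Suc m)))"
    by (rule summable_norm[OF tail])
  also have "\<dots> \<le> (\<Sum>m. norm a * norm b / Re z * w m)"
    by (rule suminf_le[OF bound tail majorant])
  also have "\<dots> = norm a * norm b / Re z * (\<Sum>m. w m)"
    by (rule suminf_mult[OF \<open>summable w\<close>])
  also have "\<dots> = norm a * norm b * W / Re z"
    by (simp add: W_def w_def)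
  finally show ?thesis .
qed

lemma hyp2F1_shift_tendsto_1: "(\<lambda>n. hyp2F1 a b (c + of_nat n)) \<longlonglongrightarrow> 1"
proof -
  obtain n0 :: nat where "norm a + norm b + 1 - Re c < of_nat n0"
    using reals_Archimedean2 by blast
  hence n0: "norm a + norm b + 1 < Re c + of_nat n0" by simp
  define W where "W = (\<Sum>m. norm (hyp2F1_term (of_real (norm a + 1)) (of_real (norm b + 1))
                                  (of_real (Re c + of_nat n0 + 1)) m))"
  have "\<forall>\<^sub>F n in sequentially. norm (hyp2F1 a b (c + of_nat n) - 1) \<le> norm a * norm b * W / (Re c + of_nat n)"
    using eventually_ge_at_top[of n0]
  proof eventually_elim
    case (elim n)
    show ?case
      using norm_hyp2F1_minus_1_le[of a b "Re c + of_nat n0" "c + of_nat n"] n0 elim by (simp add: W_def)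
  qed
  moreover have "(\<lambda>n. norm a * norm b * W / (Re c + of_nat n)) \<longlonglongrightarrow> 0"
    by real_asymp
  ultimately have "(\<lambda>n. hyp2F1 a b (c + of_nat n) - 1) \<longlonglongrightarrow> 0"
    by (rule Lim_null_comparison)
  thus ?thesis by (simp add: LIM_zero_iff)
qed

text \<open>No hypothesis on \<open>c - a\<close>, \<open>c - b\<close> is needed: \<open>Gamma\<close> is \<open>0\<close> at its poles, and the
  series then sums to \<open>0\<close> as well.\<close>

theorem Gauss_summation:
  assumes "c \<notin> \<int>\<^sub>\<le>\<^sub>0" "Re (c - a - b) > 0"
  shows "hyp2F1 a b c = Gamma c * Gamma (c - a - b) / (Gamma (c - a) * Gamma (c - b))"
proof -
  have cab: "c - a - b \<notin> \<int>\<^sub>\<le>\<^sub>0"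
    using assms(2) by (rule Re_pos_notin_nonpos_Ints)
  have "hyp2F1 a b c = pochhammer (c - a) n * pochhammer (c - b) n / (pochhammer c n * pochhammer (c - a - b) n)
                          * hyp2F1 a b (c + of_nat n)" for n
  proof -
    have "pochhammer c n * pochhammer (c - a - b) n \<noteq> 0"
      using assms(1) cab by (simp add: pochhammer_neq_0_if_not_nonpos_Int)
    with pochhammer_mult_hyp2F1_shift[OF assms, of n] show ?thesis
      by (simp add: nonzero_eq_divide_eq mult_ac)
  qed
  moreover have "(\<lambda>n. pochhammer (c - a) n * pochhammer (c - b) n / (pochhammer c n * pochhammer (c - a - b) n)
                   * hyp2F1 a b (c + of_nat n))
                 \<longlonglongrightarrow> Gamma c * Gamma (c - a - b) / (Gamma (c - a) * Gamma (c - b)) * 1"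
    using assms(1) cab by (intro tendsto_mult pochhammer_ratio_tendsto_Gamma hyp2F1_shift_tendsto_1)
  ultimately show ?thesis
    by (simp add: LIMSEQ_const_iff)
qed


section \<open>Reduction to Gauss sums\<close>

lemma pochhammer_minus_of_nat_mult_hyp2F1_term:
  "pochhammer (- of_nat (i + j)) j * hyp2F1_term a b e (i + j)
     = (-1) ^ j * (pochhammer a j * pochhammer b j / pochhammer e j)
       * hyp2F1_term (a + of_nat j) (b + of_nat j) (e + of_nat j) i"
proof -
  have minus: "pochhammer (- of_nat (i + j)) j = (-1) ^ j * pochhammer (of_nat i + 1 :: complex) j"
    using pochhammer_minus[of "of_nat (i + j) :: complex" j] by simp
  have fact: "fact (i + j) = fact i * pochhammer (of_nat i + 1 :: complex) j"
    by (simp add: pochhammer_fact pochhammer_product' add_ac)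
  have split: "pochhammer z (i + j) = pochhammer z j * pochhammer (z + of_nat j) i" for z :: complex
    by (simp add: pochhammer_product'[of z j i, symmetric] add_ac)
  have "pochhammer (of_nat i + 1 :: complex) j \<noteq> 0"
    by (rule pochhammer_neq_0_if_not_nonpos_Int)
       (metis add.commute add_of_nat_notin_nonpos_Ints of_nat_Suc of_nat_in_nonpos_Ints_iff nat.distinct(1))
  thus ?thesis
    unfolding hyp2F1_term_def minus fact split by (simp add: field_simps)
qed

lemma sums_pochhammer_minus_of_nat_mult_hyp2F1_term:
  assumes "e \<notin> \<int>\<^sub>\<le>\<^sub>0" "Re (e - a - b - of_nat j) > 0"
  shows "(\<lambda>m. pochhammer (- of_nat m) j * hyp2F1_term a b e m) sums
           ((-1) ^ j * pochhammer a j * pochhammer b j * Gamma e * Gamma (e - a - b - of_nat j)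
             / (Gamma (e - a) * Gamma (e - b)))"
proof -
  have ej: "e + of_nat j \<notin> \<int>\<^sub>\<le>\<^sub>0"
    using assms(1) by (rule add_of_nat_notin_nonpos_Ints)
  have re: "Re (e + of_nat j - (a + of_nat j) - (b + of_nat j)) > 0"
    using assms(2) by simp
  have "hyp2F1_term (a + of_nat j) (b + of_nat j) (e + of_nat j) sums
          (Gamma (e + of_nat j) * Gamma (e - a - b - of_nat j) / (Gamma (e - a) * Gamma (e - b)))"
    using summable_sums[OF summable_hyp2F1_term[OF ej re]] Gauss_summation[OF ej re]
    by (simp add: hyp2F1_def algebra_simps)
  also have "Gamma (e + of_nat j) = Gamma e * pochhammer e j"
    using assms(1) by (simp add: pochhammer_Gamma Gamma_eq_zero_iff)
  finally have "(\<lambda>i. pochhammer (- of_nat (i + j)) j * hyp2F1_term a b e (i + j)) sums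
      ((-1) ^ j * (pochhammer a j * pochhammer b j / pochhammer e j)
        * (Gamma e * pochhammer e j * Gamma (e - a - b - of_nat j) / (Gamma (e - a) * Gamma (e - b))))"
    unfolding pochhammer_minus_of_nat_mult_hyp2F1_term by (rule sums_mult)
  moreover have "pochhammer e j \<noteq> 0"
    using assms(1) by (rule pochhammer_neq_0_if_not_nonpos_Int)
  ultimately have "(\<lambda>i. pochhammer (- of_nat (i + j)) j * hyp2F1_term a b e (i + j)) sums
      ((-1) ^ j * pochhammer a j * pochhammer b j * Gamma e * Gamma (e - a - b - of_nat j)
             / (Gamma (e - a) * Gamma (e - b)))"
    by (simp add: field_simps)
  moreover have "(\<Sum>m<j. pochhammer (- of_nat m) j * hyp2F1_term a b e m) = 0"
    by (intro sum.neutral) (auto simp: pochhammer_of_nat_eq_0_lemma)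
  ultimately show ?thesis
    using sums_iff_shift[of "\<lambda>m. pochhammer (- of_nat m) j * hyp2F1_term a b e m" j] by simp
qed

lemma hyp3F2_summand_Vandermonde:
  assumes "c \<notin> \<int>\<^sub>\<le>\<^sub>0"
  shows "pochhammer a m * pochhammer b m * pochhammer (c + of_nat n) m / (fact m * pochhammer e m * pochhammer c m)
           = (\<Sum>j\<le>n. pochhammer (- of_nat n) j / (fact j * pochhammer c j)
                      * (pochhammer (- of_nat m) j * hyp2F1_term a b e m))"
proof -
  have "pochhammer a m * pochhammer b m * pochhammer (c + of_nat n) m / (fact m * pochhammer e m * pochhammer c m)
      = hyp2F1_term a b e m * (pochhammer (c + of_nat n) m / pochhammer c m)"
    by (simp add: hyp2F1_term_def)
  thus ?thesis
    unfolding pochhammer_shift_ratio_Vandermonde[OF assms] by (simp add: sum_distrib_left mult_ac)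
qed

lemma hyp3F2_as_Gauss_sum:
  assumes "c \<notin> \<int>\<^sub>\<le>\<^sub>0" "e \<notin> \<int>\<^sub>\<le>\<^sub>0" "Re (e - a - b - of_nat n) > 0"
  shows "hyp3F2 a b (c + of_nat n) e c
           = Gamma e * Gamma (e - a - b - of_nat n) / (Gamma (e - a) * Gamma (e - b))
             * (\<Sum>j\<le>n. of_nat (n choose j) * (pochhammer a j * pochhammer b j / pochhammer c j)
                        * pochhammer (e - a - b - of_nat n) (n - j))"
proof -
  define v where "v = e - a - b - of_nat n"
  define K where "K = Gamma e * Gamma v / (Gamma (e - a) * Gamma (e - b))"
  define coeff where "coeff j = pochhammer (- of_nat n) j / (fact j * pochhammer c j)" for j
  have v: "v \<notin> \<int>\<^sub>\<le>\<^sub>0"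
    using assms(3) unfolding v_def by (rule Re_pos_notin_nonpos_Ints)
  have term_expansion:
    "pochhammer a m * pochhammer b m * pochhammer (c + of_nat n) m / (fact m * pochhammer e m * pochhammer c m)
       = (\<Sum>j\<le>n. coeff j * (pochhammer (- of_nat m) j * hyp2F1_term a b e m))" for m
    unfolding hyp3F2_summand_Vandermonde[OF assms(1)] coeff_def ..
  have inner: "(\<lambda>m. pochhammer (- of_nat m) j * hyp2F1_term a b e m) sums
                 (K * (-1) ^ j * pochhammer a j * pochhammer b j * pochhammer v (n - j))"
    if "j \<le> n" for j
  proof -
    have "Gamma (e - a - b - of_nat j) = Gamma (v + of_nat (n - j))"
      using that by (simp add: v_def of_nat_diff algebra_simps)
    also have "\<dots> = Gamma v * pochhammer v (n - j)"
      using v by (simp add: pochhammer_Gamma Gamma_eq_zero_iff)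
    finally show ?thesis
      using sums_pochhammer_minus_of_nat_mult_hyp2F1_term[OF assms(2), of a b j] assms(3) that
      by (simp add: K_def v_def mult_ac)
  qed
  have "(\<lambda>m. \<Sum>j\<le>n. coeff j * (pochhammer (- of_nat m) j * hyp2F1_term a b e m)) sums
          (\<Sum>j\<le>n. coeff j * (K * (-1) ^ j * pochhammer a j * pochhammer b j * pochhammer v (n - j)))"
    by (intro sums_sum sums_mult inner) auto
  hence "hyp3F2 a b (c + of_nat n) e c
           = (\<Sum>j\<le>n. coeff j * (K * (-1) ^ j * pochhammer a j * pochhammer b j * pochhammer v (n - j)))"
    unfolding hyp3F2_def term_expansion by (rule sums_unique[symmetric])
  also have "\<dots> = K * (\<Sum>j\<le>n. of_nat (n choose j) * (pochhammer a j * pochhammer b j / pochhammer c j)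
                        * pochhammer v (n - j))"
    unfolding sum_distrib_left
  proof (rule sum.cong[OF refl])
    fix j
    have "((-1) ^ j * (-1) ^ j :: complex) = 1"
      by (simp flip: power_add)
    thus "coeff j * (K * (-1) ^ j * pochhammer a j * pochhammer b j * pochhammer v (n - j))
        = K * (of_nat (n choose j) * (pochhammer a j * pochhammer b j / pochhammer c j) * pochhammer v (n - j))"
      unfolding coeff_def pochhammer_minus_of_nat by (simp add: field_simps)
  qed
  finally show ?thesis
    by (simp add: K_def v_def)
qed


section \<open>Terminating series\<close>

definition hyp3F2_term :: "complex \<Rightarrow> complex \<Rightarrow> complex \<Rightarrow> complex \<Rightarrow> complex \<Rightarrow> nat \<Rightarrow> complex" where
  "hyp3F2_term a1 a2 a3 b1 b2 m =
     pochhammer a1 m * pochhammer a2 m * pochhammer a3 m / (fact m * pochhammer b1 m * pochhammer b2 m)"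

lemma hyp3F2_minus_of_nat:
  "hyp3F2 (- of_nat k) a b C D = (\<Sum>i\<le>k. hyp3F2_term (- of_nat k) a b C D i)"
  unfolding hyp3F2_def hyp3F2_term_def
  by (rule suminf_finite) (auto simp: pochhammer_of_nat_eq_0_lemma)

lemma of_nat_Suc_mult_hyp3F2_term_Suc:
  "of_nat (Suc m) * hyp3F2_term a1 a2 a3 b1 b2 (Suc m)
     = a1 * a2 * a3 / (b1 * b2) * hyp3F2_term (a1 + 1) (a2 + 1) (a3 + 1) (b1 + 1) (b2 + 1) m"
  unfolding hyp3F2_term_def pochhammer_rec fact_Suc of_nat_mult
  by (simp add: divide_simps del: of_nat_Suc)

lemma sum_of_nat_mult_hyp3F2_term:
  "(\<Sum>i\<le>k. of_nat i * hyp3F2_term (- of_nat k) a b C D i)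
     = - of_nat k * a * b / (C * D) * hyp3F2 (1 - of_nat k) (a + 1) (b + 1) (C + 1) (D + 1)"
proof (cases k)
  case (Suc k')
  have "(\<Sum>i\<le>k. of_nat i * hyp3F2_term (- of_nat k) a b C D i)
      = (\<Sum>i\<le>k'. of_nat (Suc i) * hyp3F2_term (- of_nat k) a b C D (Suc i))"
    unfolding Suc by (subst sum.atMost_Suc_shift) simp
  also have "\<dots> = (\<Sum>i\<le>k'. - of_nat k * a * b / (C * D) * hyp3F2_term (- of_nat k') (a + 1) (b + 1) (C + 1) (D + 1) i)"
    unfolding of_nat_Suc_mult_hyp3F2_term_Suc Suc by (simp add: mult_ac)
  also have "\<dots> = - of_nat k * a * b / (C * D) * hyp3F2 (1 - of_nat k) (a + 1) (b + 1) (C + 1) (D + 1)"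
    unfolding Suc by (simp add: hyp3F2_minus_of_nat sum_distrib_left)
  finally show ?thesis .
qed simp

lemma hyp3F2_term_minus_of_nat_mult_pochhammer:
  assumes "i \<le> k" "D \<notin> \<int>\<^sub>\<le>\<^sub>0"
  shows "hyp3F2_term (- of_nat k) a b C D i * pochhammer D k
           = (-1) ^ i * of_nat (k choose i) * (pochhammer a i * pochhammer b i / pochhammer C i)
             * pochhammer (D + of_nat i) (k - i)"
proof -
  have "pochhammer D k = pochhammer D i * pochhammer (D + of_nat i) (k - i)"
    using assms(1) by (intro pochhammer_product) auto
  thus ?thesis
    unfolding hyp3F2_term_def pochhammer_minus_of_nat
    using pochhammer_neq_0_if_not_nonpos_Int[OF assms(2), of i] by (simp add: field_simps)
qed

lemma adjacent_Gauss_sum_terms: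
  fixes a b c x :: complex
  assumes "c \<notin> \<int>\<^sub>\<le>\<^sub>0" "i \<le> k"
  defines "f j \<equiv> pochhammer a j * pochhammer b j / pochhammer c j * pochhammer (- x - of_nat k) (Suc k - j)"
  shows "c * (-1) ^ k * (f i + f (Suc i))
     = ((a + of_nat i) * (b + of_nat i) - (x + of_nat i) * (c + of_nat i))
       * ((-1) ^ i * (pochhammer a i * pochhammer b i / pochhammer (c + 1) i) * pochhammer (x + 1 + of_nat i) (k - i))"
proof -
  define p where "p = pochhammer a i * pochhammer b i"
  define y where "y = pochhammer (x + 1 + of_nat i) (k - i)"
  define s where "s = ((-1) ^ (k - i) :: complex)"
  define t where "t = ((-1) ^ i :: complex)"
  have "c + of_nat i \<noteq> 0" "c \<noteq> 0"
    using add_of_nat_notin_nonpos_Ints[OF assms(1), of i] assms(1) by auto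
  have q: "pochhammer c i \<noteq> 0"
    using assms(1) by (rule pochhammer_neq_0_if_not_nonpos_Int)
  have q1: "pochhammer (c + 1) i = pochhammer c i * (c + of_nat i) / c"
    using pochhammer_rec[of c i] pochhammer_rec'[of c i] \<open>c \<noteq> 0\<close> by (simp add: field_simps)
  have w: "pochhammer (- x - of_nat k) (k - i) = s * y"
    using pochhammer_minus[of "x + of_nat k" "k - i"] assms(2)
    by (simp add: s_def y_def of_nat_diff algebra_simps)
  have fi: "f i = - p / pochhammer c i * (x + of_nat i) * (s * y)"
    unfolding f_def p_def Suc_diff_le[OF assms(2)] pochhammer_rec' w[symmetric]
    using assms(2) by (simp add: of_nat_diff algebra_simps add_divide_distrib)
  have fSuc: "f (Suc i) = p * (a + of_nat i) * (b + of_nat i) / (pochhammer c i * (c + of_nat i)) * (s * y)"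
    unfolding f_def p_def pochhammer_rec' w[symmetric] by (simp add: mult_ac)
  have "(-1) ^ k = s * t" "s * s = 1"
    unfolding s_def t_def using assms(2) by (simp_all flip: power_add)
  hence sign: "(-1) ^ k = s * t" "s * (s * z) = z" for z
    by (simp_all add: mult.assoc[symmetric])
  define Q where "Q = pochhammer c i * (c + of_nat i)"
  have "Q \<noteq> 0"
    using q \<open>c + of_nat i \<noteq> 0\<close> by (simp add: Q_def)
  have qc: "pochhammer c i = Q / (c + of_nat i)"
    using \<open>c + of_nat i \<noteq> 0\<close> by (simp add: Q_def)
  show ?thesis
    unfolding fi fSuc sign(1) q1 p_def[symmetric] y_def[symmetric] t_def[symmetric] Q_def[symmetric]
    unfolding qc
    using \<open>c + of_nat i \<noteq> 0\<close> \<open>c \<noteq> 0\<close> \<open>Q \<noteq> 0\<close> by (simp add: field_simps sign(2))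
qed

lemma pochhammer_mult_terminating_hyp3F2_combination:
  fixes a b c d :: complex
  assumes "c \<notin> \<int>\<^sub>\<le>\<^sub>0" "a + b - d + 1 \<notin> \<int>\<^sub>\<le>\<^sub>0"
  shows "pochhammer (a + b - d + 1) k *
           ((a * (b - c) + c * (d - b)) * hyp3F2 (- of_nat k) a b (c + 1) (a + b - d + 1)
            + a * b * (c - d) * of_nat k / ((c + 1) * (a + b - d + 1))
              * hyp3F2 (1 - of_nat k) (a + 1) (b + 1) (c + 2) (a + b - d + 2))
       = c * (-1) ^ k * (\<Sum>j\<le>Suc k. of_nat (Suc k choose j) * (pochhammer a j * pochhammer b j / pochhammer c j)
                                      * pochhammer (d - a - b - of_nat k) (Suc k - j))"
proof -
  define x where "x = a + b - d"
  define T where "T i = hyp3F2_term (- of_nat k) a b (c + 1) (x + 1) i" for i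
  define f where "f j = pochhammer a j * pochhammer b j / pochhammer c j * pochhammer (- x - of_nat k) (Suc k - j)"
    for j
  have "a * b * (c - d) * of_nat k / ((c + 1) * (x + 1)) * hyp3F2 (1 - of_nat k) (a + 1) (b + 1) (c + 2) (x + 2)
          = - (c - d) * (\<Sum>i\<le>k. of_nat i * T i)"
    unfolding T_def sum_of_nat_mult_hyp3F2_term by (simp add: add.assoc divide_inverse algebra_simps)
  hence "(a * (b - c) + c * (d - b)) * hyp3F2 (- of_nat k) a b (c + 1) (x + 1)
         + a * b * (c - d) * of_nat k / ((c + 1) * (x + 1)) * hyp3F2 (1 - of_nat k) (a + 1) (b + 1) (c + 2) (x + 2)
       = (\<Sum>i\<le>k. ((a + of_nat i) * (b + of_nat i) - (x + of_nat i) * (c + of_nat i)) * T i)"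
    by (simp add: hyp3F2_minus_of_nat T_def sum_distrib_left flip: sum.distrib sum_negf)
       (simp add: x_def algebra_simps)
  hence "pochhammer (x + 1) k *
         ((a * (b - c) + c * (d - b)) * hyp3F2 (- of_nat k) a b (c + 1) (x + 1)
          + a * b * (c - d) * of_nat k / ((c + 1) * (x + 1)) * hyp3F2 (1 - of_nat k) (a + 1) (b + 1) (c + 2) (x + 2))
       = (\<Sum>i\<le>k. ((a + of_nat i) * (b + of_nat i) - (x + of_nat i) * (c + of_nat i))
                  * (T i * pochhammer (x + 1) k))"
    by (simp add: sum_distrib_left mult_ac)
  also have "\<dots> = (\<Sum>i\<le>k. of_nat (k choose i) * (c * (-1) ^ k * (f i + f (Suc i))))"
  proof (rule sum.cong[OF refl])
    fix i assume "i \<in> {..k}"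
    thus "((a + of_nat i) * (b + of_nat i) - (x + of_nat i) * (c + of_nat i)) * (T i * pochhammer (x + 1) k)
        = of_nat (k choose i) * (c * (-1) ^ k * (f i + f (Suc i)))"
      unfolding T_def f_def
      using hyp3F2_term_minus_of_nat_mult_pochhammer[of i k "x + 1" a b "c + 1"]
        adjacent_Gauss_sum_terms[OF assms(1), of i k a b x] assms(2)
      by (simp add: x_def mult_ac add_ac)
  qed
  also have "\<dots> = c * (-1) ^ k * (\<Sum>j\<le>Suc k. of_nat (Suc k choose j) * f j)"
    unfolding sum_Suc_choose_mult by (simp add: sum_distrib_left mult_ac)
  finally show ?thesis
    by (simp add: x_def f_def mult_ac add_ac diff_diff_add)
qed


theorem mainTheorem7:
  fixes a b c d :: complex and k :: nat
  assumes "c \<notin> \<int>\<^sub>\<le>\<^sub>0" and "d + 1 \<notin> \<int>\<^sub>\<le>\<^sub>0" and "a + b - d + 1 \<notin> \<int>\<^sub>\<le>\<^sub>0"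
    and "d - a + 1 \<notin> \<int>\<^sub>\<le>\<^sub>0" and "d - b + 1 \<notin> \<int>\<^sub>\<le>\<^sub>0"
    and "Re (d - a - b - of_nat k) > 0"
  shows "hyp3F2 a b (c + of_nat k + 1) (d + 1) c =
    (-1) ^ k * Gamma (d + 1) * Gamma (d - a - b - of_nat k) * pochhammer (a + b - d + 1) k
      / (c * Gamma (d - a + 1) * Gamma (d - b + 1))
    * ((a * (b - c) + c * (d - b)) * hyp3F2 (- of_nat k) a b (c + 1) (a + b - d + 1)
       + a * b * (c - d) * of_nat k / ((c + 1) * (a + b - d + 1))
         * hyp3F2 (1 - of_nat k) (a + 1) (b + 1) (c + 2) (a + b - d + 2))"
    (is "_ = ?sign * Gamma (d + 1) * Gamma _ * ?poch / _ * ?combination")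
proof -
  define K where "K = Gamma (d + 1) * Gamma (d - a - b - of_nat k) / (Gamma (d - a + 1) * Gamma (d - b + 1))"
  define S where "S = (\<Sum>j\<le>Suc k. of_nat (Suc k choose j) * (pochhammer a j * pochhammer b j / pochhammer c j)
                                      * pochhammer (d - a - b - of_nat k) (Suc k - j))"
  have "hyp3F2 a b (c + of_nat k + 1) (d + 1) c = K * S"
    using hyp3F2_as_Gauss_sum[OF assms(1,2), of a b "Suc k"] assms(6)
    by (simp add: K_def S_def algebra_simps)
  moreover have "?poch * ?combination = c * ?sign * S"
    unfolding S_def by (rule pochhammer_mult_terminating_hyp3F2_combination[OF assms(1,3)])
  moreover have "c \<noteq> 0" "?sign * ?sign = 1"
    using assms(1) by (auto simp flip: power_add)
  ultimately show ?thesis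
    by (simp add: K_def divide_inverse mult_ac)
qed

end
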